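(* Let $s\ge1$ and for $1\le i\le s$ let $K_i$ be a simplicial complex that is nice on $[n_i]$, with $d_i=\dim K_i$. Put $d=\sum_{i=1}^s d_i+s-1=\dim(K_1*\cdots*K_s)$ and suppose $\sum_{i=1}^s n_i-s-2=2d$. Then for every $i$, $n_i=2d_i+3$ and $K_i$ consists of all subsets of $[n_i]$ of cardinality at most $d_i+1$, i.e. $K_i=(\Delta_{2d_i+2})^{\le d_i}$. Consequently $\mathcal{F}_d=\{(K_1*\cdots*K_s)^d : s\ge1,\ d_i\ge0,\ K_i=(\Delta_{2d_i+2})^{\le d_i},\ \sum_{i=1}^s d_i=d-s+1\}$.
   Context: A simplicial complex is a nonempty family of subsets of a finite vertex set closed under subsets; $\dim F=|F|-1$. A complex $K$ with vertex set identified with a subset of $[n]$ is nice on $[n]$ if for every $F\subseteq[n]$ exactly one of $F$, $[n]\setminus F$ lies in $K$. The join $K_1*K_2$ has vertex set $V(K_1)\sqcup V(K_2)$ and simplices $F_1\sqcup F_2$ with $F_i\in K_i$ (iterated for several factors). $\Delta_m$ is the complex of all subsets of an $(m+1)$-element set and $K^{\le k}$ is the subcomplex of simplices of dimension at most $k$. For a $d$-dimensional complex $K$, $(K)^d$ denotes the $(d+1)$-graph on $V(K)$ whose edges are the $d$-simplices of $K$. $\mathcal{F}_d$ is the family of $(d+1)$-graphs $(K_1*\cdots*K_s)^d$ where $s\ge1$, each $K_i$ is nice on $[n_i]$, $\dim(K_1*\cdots*K_s)=d$, and $n_1+\cdots+n_s=2d+s+2$. *)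

theory Defs
  imports Main
begin

definition simplicial_complex :: "'a set set \<Rightarrow> bool" where
  "simplicial_complex K \<longleftrightarrow> K \<noteq> {} \<and> (\<forall>F\<in>K. finite F) \<and> finite K \<and>
     (\<forall>F\<in>K. \<forall>G. G \<subseteq> F \<longrightarrow> G \<in> K)"

text \<open>Dimension: max of |F| - 1 over simplices (an integer; the complex {{}} has dim -1).\<close>
definition cdim :: "'a set set \<Rightarrow> int" where
  "cdim K = Max ((\<lambda>F. int (card F) - 1) ` K)"

definition verts :: "'a set set \<Rightarrow> 'a set" where
  "verts K = \<Union>K"

definition nice :: "nat \<Rightarrow> nat set set \<Rightarrow> bool" where
  "nice n K \<longleftrightarrow> simplicial_complex K \<and> (\<forall>F\<in>K. F \<subseteq> {1..n}) \<and>
     (\<forall>F. F \<subseteq> {1..n} \<longrightarrow> ((F \<in> K) \<noteq> ({1..n} - F \<in> K)))"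

text \<open>Join of K 0, ..., K (s-1); vertex v of the i-th factor is represented by (i, v).\<close>
definition cjoin :: "nat \<Rightarrow> (nat \<Rightarrow> nat set set) \<Rightarrow> (nat \<times> nat) set set" where
  "cjoin s K = {F. (\<forall>x\<in>F. fst x < s) \<and> (\<forall>i<s. {v. (i, v) \<in> F} \<in> K i)}"

definition simplex :: "nat \<Rightarrow> nat set set" where
  "simplex m = Pow {1..m+1}"

definition skel :: "nat \<Rightarrow> 'a set set \<Rightarrow> 'a set set" where
  "skel k K = {F\<in>K. card F \<le> k + 1}"

text \<open>(K)^d: the (d+1)-graph on V(K) whose edges are the d-simplices, as (vertices, edges).\<close>
definition top_graph :: "nat \<Rightarrow> 'a set set \<Rightarrow> 'a set \<times> 'a set set" where
  "top_graph d K = (verts K, {F\<in>K. card F = d + 1})"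

definition hg_iso :: "'a set \<times> 'a set set \<Rightarrow> 'b set \<times> 'b set set \<Rightarrow> bool" where
  "hg_iso H H' \<longleftrightarrow> (\<exists>f. bij_betw f (fst H) (fst H') \<and> snd H' = (\<lambda>e. f ` e) ` snd H)"

definition famF :: "nat \<Rightarrow> ((nat \<times> nat) set \<times> (nat \<times> nat) set set) set" where
  "famF d = {top_graph d (cjoin s K) | s n K. s \<ge> 1 \<and> (\<forall>i<s. nice (n i) (K i)) \<and>
      cdim (cjoin s K) = int d \<and> (\<Sum>i<s. n i) = 2 * d + s + 2}"

definition famG :: "nat \<Rightarrow> ((nat \<times> nat) set \<times> (nat \<times> nat) set set) set" where
  "famG d = {top_graph d (cjoin s K) | s dd K. s \<ge> 1 \<and>
      (\<forall>i<s. K i = skel (dd i) (simplex (2 * dd i + 2))) \<and>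
      int (\<Sum>i<s. dd i) = int d - int s + 1}"

end

theory Submission
  imports Defs
begin

text \<open>A nice complex K on [n] of dimension d has a missing face of size d + 2, whose
  complement, of size n - d - 2, must then be a face; hence n \<le> 2d + 3. With equality, every
  set of at most d + 1 vertices has a complement of at least d + 2 vertices, which is not a
  face, so K is the full d-skeleton of the simplex on [2d + 3]. The hypothesis on the n_i says
  exactly that the slacks 2d_i + 3 - n_i, all nonnegative, sum to zero. For the description of
  F_d, factors of dimension -1 are the complex {\<emptyset>}, which is neutral for the join, so
  discarding them relabels the join into one with all d_i \<ge> 0.\<close>

lemma empty_in_complex: "simplicial_complex K \<Longrightarrow> {} \<in> K"
  unfolding simplicial_complex_def by blast

lemma finite_simplex: "simplicial_complex K \<Longrightarrow> F \<in> K \<Longrightarrow> finite F"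
  unfolding simplicial_complex_def by auto

lemma card_le_cdim:
  assumes "simplicial_complex K" and "F \<in> K"
  shows "int (card F) \<le> cdim K + 1"
proof -
  have "int (card F) - 1 \<le> cdim K"
    using assms unfolding cdim_def simplicial_complex_def by (intro Max_ge) auto
  then show ?thesis by simp
qed

lemma cdim_attained:
  assumes "simplicial_complex K"
  shows "\<exists>F\<in>K. int (card F) = cdim K + 1"
proof -
  have "cdim K \<in> (\<lambda>F. int (card F) - 1) ` K"
    using assms unfolding cdim_def simplicial_complex_def by (intro Max_in) auto
  then show ?thesis by force
qed

lemma cdim_ge_neg1: "simplicial_complex K \<Longrightarrow> cdim K \<ge> -1"
  using card_le_cdim[of K "{}"] empty_in_complex by force

lemma trivial_complex_if_cdim_neg:
  assumes "simplicial_complex K" and "cdim K < 0"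
  shows "K = {{}}"
proof -
  have "F = {}" if "F \<in> K" for F
  proof -
    have "card F = 0" using card_le_cdim[OF assms(1) that] assms(2) by linarith
    moreover have "finite F" using finite_simplex[OF assms(1) that] .
    ultimately show "F = {}" by simp
  qed
  then show ?thesis using empty_in_complex[OF assms(1)] by blast
qed

lemma card_interval_diff: "F \<subseteq> {1..n} \<Longrightarrow> card ({1..n} - F) = n - card F"
  by (simp add: card_Diff_subset finite_subset)

lemma nice_compl_iff:
  "nice n K \<Longrightarrow> F \<subseteq> {1..n} \<Longrightarrow> {1..n} - F \<in> K \<longleftrightarrow> F \<notin> K"
  unfolding nice_def by blast

lemma nice_dim_bound:
  assumes nice: "nice n K"
  shows "int n \<le> 2 * cdim K + 3"
proof -
  have sc: "simplicial_complex K" using nice unfolding nice_def by blast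
  obtain M where M: "M \<in> K" "int (card M) = cdim K + 1" using cdim_attained[OF sc] by blast
  have "{1..n} \<notin> K"
    using nice_compl_iff[OF nice, of "{}"] empty_in_complex[OF sc] by simp
  moreover have "M \<subseteq> {1..n}" using M(1) nice unfolding nice_def by blast
  ultimately have "M \<subset> {1..n}" using M(1) by blast
  then have "card M < n" using psubset_card_mono[of "{1..n}" M] by simp
  then have "nat (cdim K + 2) \<le> card {1..n}" using M(2) by simp
  then obtain F where F: "F \<subseteq> {1..n}" "card F = nat (cdim K + 2)"
    by (rule obtain_subset_with_card_n)
  have "\<not> int (card F) \<le> cdim K + 1" using F(2) cdim_ge_neg1[OF sc] by linarith
  then have "F \<notin> K" using card_le_cdim[OF sc] by blast
  then have "int (card ({1..n} - F)) \<le> cdim K + 1"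
    using card_le_cdim[OF sc] nice_compl_iff[OF nice F(1)] by blast
  moreover have "card F \<le> n" using card_mono[OF _ F(1)] by simp
  ultimately show ?thesis using F card_interval_diff[OF F(1)] cdim_ge_neg1[OF sc] by linarith
qed

lemma nice_extremal_eq:
  assumes nice: "nice n K" and n: "int n = 2 * cdim K + 3"
  shows "K = {F. F \<subseteq> {1..n} \<and> int (card F) \<le> cdim K + 1}"
proof -
  have sc: "simplicial_complex K" using nice unfolding nice_def by blast
  have "F \<in> K" if F: "F \<subseteq> {1..n}" "int (card F) \<le> cdim K + 1" for F
  proof -
    have "card F \<le> n" using card_mono[OF _ F(1)] by simp
    then have "int (card ({1..n} - F)) > cdim K + 1"
      using F n card_interval_diff[OF F(1)] by simp
    then have "{1..n} - F \<notin> K" using card_le_cdim[OF sc] by force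
    then show "F \<in> K" using nice_compl_iff[OF nice F(1)] by blast
  qed
  then show ?thesis using nice card_le_cdim[OF sc] unfolding nice_def by blast
qed

lemma nice_factors_extremal:
  assumes nice: "\<forall>i<s. nice (n i) (K i)"
    and sum: "(\<Sum>i<s. int (n i)) = 2 * (\<Sum>i<s. cdim (K i)) + 3 * int s"
  shows "\<forall>i<s. int (n i) = 2 * cdim (K i) + 3 \<and>
              K i = {F. F \<subseteq> {1..n i} \<and> int (card F) \<le> cdim (K i) + 1}"
proof -
  define slack where "slack i = 2 * cdim (K i) + 3 - int (n i)" for i
  have "\<forall>i\<in>{..<s}. slack i \<ge> 0" using nice nice_dim_bound unfolding slack_def by force
  moreover have "(\<Sum>i<s. slack i) = 0"
    using sum unfolding slack_def by (simp add: sum_subtractf sum.distrib sum_distrib_left)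
  ultimately have "\<forall>i<s. slack i = 0" using sum_nonneg_eq_0_iff[of "{..<s}" slack] by simp
  then show ?thesis using nice nice_extremal_eq unfolding slack_def by force
qed

lemma skel_simplex_eq:
  "skel d (simplex (2 * d + 2)) = {F. F \<subseteq> {1..2 * d + 3} \<and> card F \<le> d + 1}"
  unfolding skel_def simplex_def by auto

lemma nice_extremal_eq_skel:
  assumes nice: "nice n K" and n: "int n = 2 * cdim K + 3" and dim: "cdim K \<ge> 0"
  shows "K = skel (nat (cdim K)) (simplex (2 * nat (cdim K) + 2))"
proof -
  define d where "d = nat (cdim K)"
  have d: "cdim K = int d" using dim unfolding d_def by simp
  then have n': "n = 2 * d + 3" using n by linarith
  have card: "int (card F) \<le> int d + 1 \<longleftrightarrow> card F \<le> d + 1" for F by linarith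
  show ?thesis
    unfolding d_def[symmetric] skel_simplex_eq
    by (subst nice_extremal_eq[OF nice n]) (simp only: d n' card)
qed

lemma nice_skel_simplex: "nice (2 * d + 3) (skel d (simplex (2 * d + 2)))"
proof -
  let ?V = "{1..2 * d + 3}"
  let ?S = "{F. F \<subseteq> ?V \<and> card F \<le> d + 1}"
  have "{} \<in> ?S" by simp
  moreover have "finite ?S" by (rule finite_subset[of _ "Pow ?V"]) auto
  moreover have finite: "\<forall>F\<in>?S. finite F" using finite_subset by blast
  moreover have "\<forall>F\<in>?S. \<forall>G. G \<subseteq> F \<longrightarrow> G \<in> ?S"
  proof (intro ballI allI impI)
    fix F G assume F: "F \<in> ?S" and "G \<subseteq> F"
    then have "card G \<le> card F" using finite card_mono by blast
    then show "G \<in> ?S" using F \<open>G \<subseteq> F\<close> by auto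
  qed
  moreover have "(F \<in> ?S) \<noteq> (?V - F \<in> ?S)" if F: "F \<subseteq> ?V" for F
  proof -
    have "card F \<le> 2 * d + 3" using card_mono[OF _ F] by simp
    then show ?thesis using F card_interval_diff[OF F] by auto
  qed
  ultimately show ?thesis
    unfolding nice_def simplicial_complex_def skel_simplex_eq by blast
qed

lemma cdim_skel_simplex: "cdim (skel d (simplex (2 * d + 2))) = int d"
proof -
  have sc: "simplicial_complex (skel d (simplex (2 * d + 2)))"
    using nice_skel_simplex unfolding nice_def by blast
  have "{1..d + 1} \<in> skel d (simplex (2 * d + 2))" unfolding skel_simplex_eq by simp
  then have "int d \<le> cdim (skel d (simplex (2 * d + 2)))" using card_le_cdim[OF sc] by force
  moreover obtain F where "F \<in> skel d (simplex (2 * d + 2))"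
    "int (card F) = cdim (skel d (simplex (2 * d + 2))) + 1"
    using cdim_attained[OF sc] by blast
  ultimately show ?thesis unfolding skel_simplex_eq by force
qed

lemma cjoin_slice: "F \<in> cjoin s K \<Longrightarrow> i < s \<Longrightarrow> {v. (i, v) \<in> F} \<in> K i"
  unfolding cjoin_def by blast

lemma cjoin_eq_Sigma_slices: "F \<in> cjoin s K \<Longrightarrow> F = (SIGMA i:{..<s}. {v. (i, v) \<in> F})"
  unfolding cjoin_def by auto

lemma simplicial_complex_cjoin:
  assumes sc: "\<forall>i<s. simplicial_complex (K i)"
  shows "simplicial_complex (cjoin s K)"
proof -
  let ?V = "SIGMA i:{..<s}. \<Union>(K i)"
  have fin: "finite ?V" using sc unfolding simplicial_complex_def by (intro finite_SigmaI) auto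
  have sub: "cjoin s K \<subseteq> Pow ?V"
  proof
    fix F assume F: "F \<in> cjoin s K"
    have "F \<subseteq> ?V"
    proof
      fix x assume "x \<in> F"
      moreover obtain i v where x: "x = (i, v)" by force
      ultimately have "i < s" "v \<in> {v. (i, v) \<in> F}" using F unfolding cjoin_def by force+
      then show "x \<in> ?V" using x cjoin_slice[OF F] by blast
    qed
    then show "F \<in> Pow ?V" by simp
  qed
  have "{} \<in> cjoin s K" unfolding cjoin_def using sc empty_in_complex by auto
  moreover have "G \<in> cjoin s K" if F: "F \<in> cjoin s K" and GF: "G \<subseteq> F" for F G
  proof -
    have "{v. (i, v) \<in> G} \<in> K i" if "i < s" for i
    proof -
      have "{v. (i, v) \<in> G} \<subseteq> {v. (i, v) \<in> F}" using GF by blast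
      then show ?thesis
        using sc \<open>i < s\<close> cjoin_slice[OF F \<open>i < s\<close>]
        unfolding simplicial_complex_def by blast
    qed
    moreover have "\<forall>x\<in>G. fst x < s" using F GF unfolding cjoin_def by blast
    ultimately show ?thesis unfolding cjoin_def by blast
  qed
  moreover have "\<forall>F\<in>cjoin s K. finite F" using sub fin by (meson PowD finite_subset subsetD)
  moreover have "finite (cjoin s K)" using sub fin by (simp add: finite_subset)
  ultimately show ?thesis unfolding simplicial_complex_def by blast
qed

lemma cdim_cjoin:
  assumes sc: "\<forall>i<s. simplicial_complex (K i)"
  shows "cdim (cjoin s K) = (\<Sum>i<s. cdim (K i)) + int s - 1"
proof -
  have sc_join: "simplicial_complex (cjoin s K)" by (rule simplicial_complex_cjoin[OF sc])
  have "int (card F) \<le> (\<Sum>i<s. cdim (K i)) + int s" if F: "F \<in> cjoin s K" for F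
  proof -
    have "finite {v. (i, v) \<in> F}" if "i < s" for i
      using sc that finite_simplex cjoin_slice[OF F that] by blast
    then have "int (card F) = (\<Sum>i<s. int (card {v. (i, v) \<in> F}))"
      by (subst cjoin_eq_Sigma_slices[OF F]) (simp add: card_SigmaI)
    also have "\<dots> \<le> (\<Sum>i<s. cdim (K i) + 1)"
      using sc card_le_cdim cjoin_slice[OF F] by (intro sum_mono) auto
    finally show ?thesis by (simp add: sum.distrib)
  qed
  moreover have "\<exists>F\<in>cjoin s K. int (card F) = (\<Sum>i<s. cdim (K i)) + int s"
  proof -
    have "\<forall>i. \<exists>F. i < s \<longrightarrow> F \<in> K i \<and> int (card F) = cdim (K i) + 1"
      using sc cdim_attained by blast
    then obtain M where M: "\<forall>i<s. M i \<in> K i \<and> int (card (M i)) = cdim (K i) + 1"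
      by metis
    let ?F = "SIGMA i:{..<s}. M i"
    have "?F \<in> cjoin s K" using M unfolding cjoin_def by auto
    moreover have "finite (M i)" if "i < s" for i
      using M sc finite_simplex that by blast
    then have "int (card ?F) = (\<Sum>i<s. cdim (K i) + 1)"
      using M by (simp add: card_SigmaI)
    ultimately show ?thesis by (auto simp: sum.distrib)
  qed
  ultimately show ?thesis
    using card_le_cdim[OF sc_join] cdim_attained[OF sc_join] by fastforce
qed

lemma hg_iso_refl: "hg_iso H H"
  unfolding hg_iso_def by (intro exI[of _ id]) simp

lemma hg_iso_top_graph_to_image:
  assumes inj: "inj_on \<phi> (\<Union>C)"
  shows "hg_iso (top_graph e C) (top_graph e ((`) \<phi> ` C))"
proof -
  have "card (\<phi> ` F) = card F" if "F \<in> C" for F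
    using inj that by (meson Union_upper card_image inj_on_subset)
  then show ?thesis
    unfolding hg_iso_def top_graph_def verts_def using inj
    by (intro exI[of _ \<phi>]) (auto simp: bij_betw_def)
qed

lemma hg_iso_top_graph_from_image:
  assumes inj: "inj_on \<phi> (\<Union>C)"
  shows "hg_iso (top_graph e ((`) \<phi> ` C)) (top_graph e C)"
proof -
  let ?\<psi> = "the_inv_into (\<Union>C) \<phi>"
  have "inj_on ?\<psi> (\<Union>((`) \<phi> ` C))"
    using inj_on_the_inv_into[OF inj] by (simp add: image_Union)
  moreover have "(`) ?\<psi> ` (`) \<phi> ` C = C"
  proof -
    have "?\<psi> ` \<phi> ` F = F" if "F \<in> C" for F
    proof -
      have "(\<lambda>x. ?\<psi> (\<phi> x)) ` F = (\<lambda>x. x) ` F"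
        by (rule image_cong) (use the_inv_into_f_f[OF inj] that in auto)
      then show ?thesis by (simp add: image_image)
    qed
    then show ?thesis by (simp add: image_image)
  qed
  ultimately show ?thesis using hg_iso_top_graph_to_image[of ?\<psi> "(`) \<phi> ` C" e] by simp
qed

lemma cdim_image:
  assumes inj: "inj_on \<phi> (\<Union>C)"
  shows "cdim ((`) \<phi> ` C) = cdim C"
proof -
  have "card (\<phi> ` F) = card F" if "F \<in> C" for F
    using inj that by (meson Union_upper card_image inj_on_subset)
  then show ?thesis
    unfolding cdim_def image_image by (intro arg_cong[where f = Max] image_cong) simp_all
qed

lemma cjoin_drop_trivial_factors:
  assumes h: "bij_betw h {..<t} J" and J: "J \<subseteq> {..<s}"
    and trivial: "\<forall>i\<in>{..<s} - J. K i = {{}}"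
  shows "cjoin s K = (`) (\<lambda>(k, v). (h k, v)) ` cjoin t (\<lambda>k. K (h k))"
proof (intro equalityI subsetI)
  fix F assume F: "F \<in> cjoin s K"
  define G where "G = {(k, v). k < t \<and> (h k, v) \<in> F}"
  have "h k < s" if "k < t" for k using h J that by (auto simp: bij_betw_def)
  then have "G \<in> cjoin t (\<lambda>k. K (h k))"
    using F unfolding cjoin_def G_def by auto
  moreover have "F \<subseteq> (\<lambda>(k, v). (h k, v)) ` G"
  proof
    fix x assume x: "x \<in> F"
    obtain i v where [simp]: "x = (i, v)" by force
    have "i < s" using F x unfolding cjoin_def by force
    moreover have "{v. (i, v) \<in> F} \<noteq> {}" using x by auto
    ultimately have "i \<in> J"
      using trivial cjoin_slice[OF F \<open>i < s\<close>] by (metis Diff_iff lessThan_iff singletonD)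
    then obtain k where "k < t" "i = h k" using h by (auto simp: bij_betw_def)
    then show "x \<in> (\<lambda>(k, v). (h k, v)) ` G" using x unfolding G_def by force
  qed
  moreover have "(\<lambda>(k, v). (h k, v)) ` G \<subseteq> F" unfolding G_def by auto
  ultimately show "F \<in> (`) (\<lambda>(k, v). (h k, v)) ` cjoin t (\<lambda>k. K (h k))" by blast
next
  fix F assume "F \<in> (`) (\<lambda>(k, v). (h k, v)) ` cjoin t (\<lambda>k. K (h k))"
  then obtain G where G: "G \<in> cjoin t (\<lambda>k. K (h k))" and F: "F = (\<lambda>(k, v). (h k, v)) ` G"
    by blast
  have hinj: "inj_on h {..<t}" and himg: "h ` {..<t} = J" using h by (auto simp: bij_betw_def)
  have Gt: "fst x < t" if "x \<in> G" for x using G that unfolding cjoin_def by blast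
  have "{v. (i, v) \<in> F} \<in> K i" if i: "i < s" for i
  proof (cases "i \<in> J")
    case True
    then obtain k where k: "k < t" "i = h k" using himg by auto
    have "{v. (i, v) \<in> F} = {v. (k, v) \<in> G}"
      using k hinj Gt unfolding F inj_on_def by force
    then show ?thesis using cjoin_slice[OF G k(1)] k(2) by simp
  next
    case False
    then have "{v. (i, v) \<in> F} = {}" using himg Gt unfolding F by force
    then show ?thesis using trivial i False by simp
  qed
  moreover have "fst x < s" if "x \<in> F" for x using that Gt himg J unfolding F by force
  ultimately show "F \<in> cjoin s K" unfolding cjoin_def by blast
qed

lemma famG_subset_famF: "famG e \<subseteq> famF e"
proof
  fix H assume "H \<in> famG e"
  then obtain s dd K where H: "H = top_graph e (cjoin s K)" and s: "s \<ge> 1"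
    and K: "\<forall>i<s. K i = skel (dd i) (simplex (2 * dd i + 2))"
    and sum: "int (\<Sum>i<s. dd i) = int e - int s + 1"
    unfolding famG_def by blast
  define n where "n i = 2 * dd i + 3" for i
  have nice: "\<forall>i<s. nice (n i) (K i)" using K nice_skel_simplex unfolding n_def by simp
  then have "cdim (cjoin s K) = (\<Sum>i<s. int (dd i)) + int s - 1"
    using cdim_cjoin[of s K] K cdim_skel_simplex unfolding nice_def by simp
  then have "cdim (cjoin s K) = int e" using sum by simp
  moreover have "int (\<Sum>i<s. n i) = 2 * int (\<Sum>i<s. dd i) + 3 * int s"
    unfolding n_def by (simp add: sum.distrib sum_distrib_left)
  then have "(\<Sum>i<s. n i) = 2 * e + s + 2" using sum by linarith
  ultimately show "H \<in> famF e" unfolding famF_def H using s nice by blast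
qed

lemma famF_iso_famG:
  assumes "H \<in> famF e"
  shows "\<exists>H'\<in>famG e. hg_iso H H'"
proof -
  obtain s n K where H: "H = top_graph e (cjoin s K)" and nice: "\<forall>i<s. nice (n i) (K i)"
    and dim: "cdim (cjoin s K) = int e" and sum: "(\<Sum>i<s. n i) = 2 * e + s + 2"
    using assms unfolding famF_def by blast
  have sc: "\<forall>i<s. simplicial_complex (K i)" using nice unfolding nice_def by blast
  have "(\<Sum>i<s. int (n i)) = 2 * (\<Sum>i<s. cdim (K i)) + 3 * int s"
    using sum dim cdim_cjoin[OF sc] by (simp flip: of_nat_sum)
  note extremal = nice_factors_extremal[OF nice this]
  define J where "J = {i. i < s \<and> cdim (K i) \<ge> 0}"
  define t where "t = card J"
  obtain h where h: "bij_betw h {..<t} J"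
    using ex_bij_betw_nat_finite[of J] unfolding t_def J_def atLeast0LessThan by auto
  have hJ: "h k < s" "cdim (K (h k)) \<ge> 0" if "k < t" for k
    using h that unfolding J_def bij_betw_def by auto
  define dd where "dd k = nat (cdim (K (h k)))" for k
  have K': "K (h k) = skel (dd k) (simplex (2 * dd k + 2))" if "k < t" for k
    unfolding dd_def using nice extremal hJ[OF that] by (intro nice_extremal_eq_skel) auto
  have trivial: "\<forall>i\<in>{..<s} - J. K i = {{}}"
    using sc trivial_complex_if_cdim_neg unfolding J_def
    by (metis Diff_iff lessThan_iff mem_Collect_eq not_le)
  have join: "cjoin s K = (`) (\<lambda>(k, v). (h k, v)) ` cjoin t (\<lambda>k. K (h k))"
    by (rule cjoin_drop_trivial_factors[OF h _ trivial]) (auto simp: J_def)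
  have inj: "inj_on (\<lambda>(k, v). (h k, v)) (\<Union>(cjoin t (\<lambda>k. K (h k))))"
    using h unfolding cjoin_def bij_betw_def inj_on_def by fastforce
  have e: "int e = (\<Sum>k<t. int (dd k)) + int t - 1"
    using dim cdim_cjoin[of t "\<lambda>k. K (h k)"] sc hJ unfolding join cdim_image[OF inj] dd_def
    by simp
  then have "t \<ge> 1" by (cases t) simp_all
  moreover have "int (\<Sum>k<t. dd k) = int e - int t + 1" using e by simp
  ultimately have "top_graph e (cjoin t (\<lambda>k. K (h k))) \<in> famG e"
    unfolding famG_def using K' by blast
  moreover have "hg_iso H (top_graph e (cjoin t (\<lambda>k. K (h k))))"
    unfolding H join by (rule hg_iso_top_graph_from_image[OF inj])
  ultimately show ?thesis by blast
qed

theorem lemma3p8: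
  fixes s :: nat and n :: "nat \<Rightarrow> nat" and K :: "nat \<Rightarrow> nat set set" and d :: int
  assumes "s \<ge> 1"
    and "\<forall>i<s. nice (n i) (K i)"
    and "d = (\<Sum>i<s. cdim (K i)) + int s - 1"
    and "(\<Sum>i<s. int (n i)) - int s - 2 = 2 * d"
  shows "(\<forall>i<s. int (n i) = 2 * cdim (K i) + 3 \<and>
              K i = {F. F \<subseteq> {1..n i} \<and> int (card F) \<le> cdim (K i) + 1})
       \<and> (\<forall>e::nat. (\<forall>H\<in>famF e. \<exists>H'\<in>famG e. hg_iso H H')
                 \<and> (\<forall>H'\<in>famG e. \<exists>H\<in>famF e. hg_iso H' H))"
proof (rule conjI)
  show "\<forall>i<s. int (n i) = 2 * cdim (K i) + 3 \<and>
              K i = {F. F \<subseteq> {1..n i} \<and> int (card F) \<le> cdim (K i) + 1}"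
    using nice_factors_extremal[OF assms(2)] assms(3,4) by simp
  show "\<forall>e::nat. (\<forall>H\<in>famF e. \<exists>H'\<in>famG e. hg_iso H H')
                 \<and> (\<forall>H'\<in>famG e. \<exists>H\<in>famF e. hg_iso H' H)"
    using famF_iso_famG famG_subset_famF hg_iso_refl by blast
qed

end
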